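(* For any sequence of instances $\{\mathcal{I}_N\}_{N\ge1}$ of the binary voting game there exists a sequence of regular strategy profiles $\{\Sigma'_N\}_{N\ge1}$ ($\Sigma'_N$ a profile in $\mathcal{I}_N$) such that $\lim_{N\to\infty}A(\Sigma'_N)=1$.
   Context: Binary voting game. An instance has $N$ agents each voting for $\mathbf{A}$ or $\mathbf{R}$. Unobserved world state $W\in\{L,H\}$ with common prior $P_L,P_H>0$. Conditional on $W$, each agent independently receives a signal $S_n\in\{l,h\}$ with $P_{sw}=\Pr[S_n=s\mid W=w]$, $P_{hH}>P_{hL}$, $P_{lH}<P_{lL}$. With threshold $\mu\in(0,1)$, $\mathbf{A}$ wins iff at least $\mu N$ agents vote $\mathbf{A}$, else $\mathbf{R}$ wins. Agent $n$ has utility $v_n:\{L,H\}\times\{\mathbf{A},\mathbf{R}\}\to\{0,\dots,B\}$ with $v_n(H,\mathbf{A})>v_n(L,\mathbf{A})$, $v_n(H,\mathbf{R})<v_n(L,\mathbf{R})$. Every agent is friendly ($v_n(H,\mathbf{A})>v_n(L,\mathbf{A})>v_n(L,\mathbf{R})>v_n(H,\mathbf{R})$), unfriendly ($v_n(L,\mathbf{R})>v_n(H,\mathbf{R})>v_n(H,\mathbf{A})>v_n(L,\mathbf{A})$), or contingent ($v_n(H,\mathbf{A})>v_n(H,\mathbf{R})$, $v_n(L,\mathbf{R})>v_n(L,\mathbf{A})$). Fixed constants $\alpha_F,\alpha_U,\alpha_C\ge0$ summing to $1$: $N_F=\lfloor\alpha_F N\rfloor$ friendly, $N_U=\lfloor\alpha_U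 N\rfloor$ unfriendly, $N_C=N-N_F-N_U$ contingent agents. Standing assumption: $\alpha_F<\mu$ and $\alpha_U<1-\mu$ (neither predetermined group can dominate), so the informed majority decision is $\mathbf{A}$ in $H$ and $\mathbf{R}$ in $L$. A sequence of instances $\{\mathcal{I}_N\}$: $\mathcal{I}_N$ has $N$ agents; all share $\mu$, prior, signal distributions and $\alpha$'s; utilities arbitrary. Strategy $\sigma=(\beta_l,\beta_h)$ with $\beta_s$ = probability of voting $\mathbf{A}$ on signal $s$. A profile is regular if friendly agents always vote $\mathbf{A}$ and unfriendly agents always vote $\mathbf{R}$. Fidelity: $A(\Sigma)=P_L\lambda^{\mathbf{R}}_L(\Sigma)+P_H\lambda^{\mathbf{A}}_H(\Sigma)$, where $\lambda^{\mathbf{X}}_w(\Sigma)$ is the ex-ante probability that $\mathbf{X}$ wins in state $w$. *)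

theory Defs
  imports Complex_Main
begin

datatype world = L | H
datatype outcome = Acc | Rej   (* Acc = alternative A, Rej = alternative R *)
datatype signal = sl | sh

type_synonym utility = "world \<Rightarrow> outcome \<Rightarrow> nat"
type_synonym strategy = "real \<times> real"   (* (beta_l, beta_h) *)

definition friendly :: "utility \<Rightarrow> bool" where
  "friendly v \<longleftrightarrow> v H Acc > v L Acc \<and> v L Acc > v L Rej \<and> v L Rej > v H Rej"

definition unfriendly :: "utility \<Rightarrow> bool" where
  "unfriendly v \<longleftrightarrow> v L Rej > v H Rej \<and> v H Rej > v H Acc \<and> v H Acc > v L Acc"

definition contingent :: "utility \<Rightarrow> bool" where
  "contingent v \<longleftrightarrow> v H Acc > v H Rej \<and> v L Rej > v L Acc"

definition valid_instance :: "nat \<Rightarrow> real \<Rightarrow> real \<Rightarrow> nat \<Rightarrow> (nat \<Rightarrow> utility) \<Rightarrow> bool" where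
  "valid_instance B alphaF alphaU N v \<longleftrightarrow>
     (\<forall>n<N. \<forall>w x. v n w x \<le> B) \<and>
     (\<forall>n<N. v n H Acc > v n L Acc \<and> v n H Rej < v n L Rej) \<and>
     (\<forall>n<N. friendly (v n) \<or> unfriendly (v n) \<or> contingent (v n)) \<and>
     card {n. n < N \<and> friendly (v n)} = nat \<lfloor>alphaF * real N\<rfloor> \<and>
     card {n. n < N \<and> unfriendly (v n)} = nat \<lfloor>alphaU * real N\<rfloor>"

definition valid_strategy :: "strategy \<Rightarrow> bool" where
  "valid_strategy \<sigma> \<longleftrightarrow> 0 \<le> fst \<sigma> \<and> fst \<sigma> \<le> 1 \<and> 0 \<le> snd \<sigma> \<and> snd \<sigma> \<le> 1"

definition regular_profile :: "nat \<Rightarrow> (nat \<Rightarrow> utility) \<Rightarrow> (nat \<Rightarrow> strategy) \<Rightarrow> bool" where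
  "regular_profile N v \<Sigma> \<longleftrightarrow>
     (\<forall>n<N. valid_strategy (\<Sigma> n)) \<and>
     (\<forall>n<N. friendly (v n) \<longrightarrow> \<Sigma> n = (1, 1)) \<and>
     (\<forall>n<N. unfriendly (v n) \<longrightarrow> \<Sigma> n = (0, 0))"

definition prob_voteA :: "(signal \<Rightarrow> world \<Rightarrow> real) \<Rightarrow> strategy \<Rightarrow> world \<Rightarrow> real" where
  "prob_voteA Ps \<sigma> w = Ps sl w * fst \<sigma> + Ps sh w * snd \<sigma>"

definition prob_voters :: "(signal \<Rightarrow> world \<Rightarrow> real) \<Rightarrow> nat \<Rightarrow> (nat \<Rightarrow> strategy) \<Rightarrow> world \<Rightarrow> nat set \<Rightarrow> real" where
  "prob_voters Ps N \<Sigma> w S =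
     (\<Prod>n\<in>S. prob_voteA Ps (\<Sigma> n) w) * (\<Prod>n\<in>{..<N} - S. 1 - prob_voteA Ps (\<Sigma> n) w)"

definition win_prob :: "(signal \<Rightarrow> world \<Rightarrow> real) \<Rightarrow> real \<Rightarrow> nat \<Rightarrow> (nat \<Rightarrow> strategy) \<Rightarrow> world \<Rightarrow> outcome \<Rightarrow> real" where
  "win_prob Ps \<mu> N \<Sigma> w X =
     (\<Sum>S\<in>{S. S \<subseteq> {..<N} \<and> ((\<mu> * real N \<le> real (card S)) = (X = Acc))}. prob_voters Ps N \<Sigma> w S)"

definition fidelity :: "real \<Rightarrow> real \<Rightarrow> (signal \<Rightarrow> world \<Rightarrow> real) \<Rightarrow> real \<Rightarrow> nat \<Rightarrow> (nat \<Rightarrow> strategy) \<Rightarrow> real" where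
  "fidelity PL PH Ps \<mu> N \<Sigma> = PL * win_prob Ps \<mu> N \<Sigma> L Rej + PH * win_prob Ps \<mu> N \<Sigma> H Acc"

end

theory Submission
  imports Defs
begin

text \<open>Let every friendly agent vote A, every unfriendly agent vote R, and every contingent
  agent play one common mixed strategy under which it votes A with probability \<open>t - g\<close> in
  state L and \<open>t + g\<close> in state H, where \<open>t = (\<mu> - \<alpha>\<^sub>F) / \<alpha>\<^sub>C\<close>
  and \<open>g > 0\<close>; such a strategy exists because the signal is informative.
  Then the expected number of A-votes is \<open>\<mu>N - \<alpha>\<^sub>C g N + O(1)\<close> in L and
  \<open>\<mu>N + \<alpha>\<^sub>C g N + O(1)\<close> in H, while the votes are independent, so their
  variance is at most N. By Chebyshev's inequality the wrong alternative wins with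
  probability \<open>O(1/N)\<close> in either state, hence the fidelity tends to 1.\<close>

definition subset_prob :: "('a \<Rightarrow> real) \<Rightarrow> 'a set \<Rightarrow> 'a set \<Rightarrow> real" where
  "subset_prob q I S = (\<Prod>n\<in>S. q n) * (\<Prod>n\<in>I - S. 1 - q n)"

lemma subset_prob_nonneg:
  assumes "\<And>n. n \<in> I \<Longrightarrow> 0 \<le> q n \<and> q n \<le> 1" "S \<subseteq> I"
  shows "0 \<le> subset_prob q I S"
  unfolding subset_prob_def using assms by (intro mult_nonneg_nonneg prod_nonneg) auto

lemma sum_subset_prob: "finite I \<Longrightarrow> (\<Sum>S\<in>Pow I. subset_prob q I S) = 1"
  using prod_add[of I q "\<lambda>n. 1 - q n"] by (simp add: subset_prob_def)

lemma sum_Pow_insert: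
  assumes "finite I" "a \<notin> I"
  shows "(\<Sum>S\<in>Pow (insert a I). h S) = (\<Sum>S\<in>Pow I. h S) + (\<Sum>S\<in>Pow I. h (insert a S))"
proof -
  have "inj_on (insert a) (Pow I)"
    using assms(2) by (intro inj_onI) (metis PowD insert_ident subsetD)
  then show ?thesis
    unfolding Pow_insert using assms
    by (subst sum.union_disjoint) (auto simp: sum.reindex)
qed

lemma sum_subset_prob_insert:
  assumes "finite I" "a \<notin> I"
  shows "(\<Sum>S\<in>Pow (insert a I). subset_prob q (insert a I) S * f (card S)) =
    (1 - q a) * (\<Sum>S\<in>Pow I. subset_prob q I S * f (card S))
    + q a * (\<Sum>S\<in>Pow I. subset_prob q I S * f (Suc (card S)))"
proof -
  have "subset_prob q (insert a I) S = (1 - q a) * subset_prob q I S"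
    and "subset_prob q (insert a I) (insert a S) = q a * subset_prob q I S"
    and "card (insert a S) = Suc (card S)" if "S \<subseteq> I" for S
  proof -
    have "finite S" "a \<notin> S" "a \<notin> I - S"
      using that assms finite_subset by auto
    moreover have "insert a I - S = insert a (I - S)" "insert a I - insert a S = I - S"
      using that assms by auto
    ultimately show "subset_prob q (insert a I) S = (1 - q a) * subset_prob q I S"
      and "subset_prob q (insert a I) (insert a S) = q a * subset_prob q I S"
      and "card (insert a S) = Suc (card S)"
      unfolding subset_prob_def using assms(1) by simp_all
  qed
  then show ?thesis
    using assms by (simp add: sum_Pow_insert sum_distrib_left mult.assoc)
qed

lemma sum_subset_prob_card:
  "finite I \<Longrightarrow> (\<Sum>S\<in>Pow I. subset_prob q I S * real (card S)) = sum q I"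
proof (induction I rule: finite_induct)
  case (insert a I)
  then show ?case
    using sum_subset_prob_insert[OF insert(1,2), of q real] sum_subset_prob[OF insert(1), of q]
    by (simp add: algebra_simps sum.distrib)
qed (simp add: subset_prob_def)

lemma sum_subset_prob_card_squared:
  "finite I \<Longrightarrow> (\<Sum>S\<in>Pow I. subset_prob q I S * real (card S)^2) =
    (sum q I)^2 + (\<Sum>n\<in>I. q n * (1 - q n))"
proof (induction I rule: finite_induct)
  case (insert a I)
  let ?M2 = "\<Sum>S\<in>Pow I. subset_prob q I S * real (card S)^2"
  have "(\<Sum>S\<in>Pow I. subset_prob q I S * real (Suc (card S))^2) =
      ?M2 + 2 * (\<Sum>S\<in>Pow I. subset_prob q I S * real (card S)) + (\<Sum>S\<in>Pow I. subset_prob q I S)"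
    by (simp add: algebra_simps power2_eq_square sum.distrib sum_distrib_left)
  also have "\<dots> = ?M2 + 2 * sum q I + 1"
    using insert(1) by (simp add: sum_subset_prob sum_subset_prob_card)
  finally show ?case
    using sum_subset_prob_insert[OF insert(1,2), of q "\<lambda>k. real k ^ 2"] insert
    by (simp add: algebra_simps power2_eq_square)
qed (simp add: subset_prob_def)

lemma sum_subset_prob_deviation_squared:
  assumes "finite I"
  shows "(\<Sum>S\<in>Pow I. subset_prob q I S * (real (card S) - sum q I)^2) = (\<Sum>n\<in>I. q n * (1 - q n))"
proof -
  let ?E = "sum q I"
  have "(\<Sum>S\<in>Pow I. subset_prob q I S * (real (card S) - ?E)^2) =
      (\<Sum>S\<in>Pow I. subset_prob q I S * real (card S)^2
        - 2 * ?E * (subset_prob q I S * real (card S)) + ?E^2 * subset_prob q I S)"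
    by (intro sum.cong) (simp_all add: power2_eq_square algebra_simps)
  also have "\<dots> = (\<Sum>S\<in>Pow I. subset_prob q I S * real (card S)^2)
      - 2 * ?E * (\<Sum>S\<in>Pow I. subset_prob q I S * real (card S))
      + ?E^2 * (\<Sum>S\<in>Pow I. subset_prob q I S)"
    by (simp only: sum.distrib sum_subtractf sum_distrib_left)
  finally show ?thesis
    using sum_subset_prob_card_squared[OF assms, of q] assms
    by (simp add: sum_subset_prob sum_subset_prob_card power2_eq_square)
qed

lemma chebyshev_subset_prob:
  assumes "finite I" "\<And>n. n \<in> I \<Longrightarrow> 0 \<le> q n \<and> q n \<le> 1" "D > 0" "T \<subseteq> Pow I"
    "\<And>S. S \<in> T \<Longrightarrow> D \<le> \<bar>real (card S) - sum q I\<bar>"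
  shows "sum (subset_prob q I) T \<le> real (card I) / D^2"
proof -
  let ?dev = "\<lambda>S. subset_prob q I S * (real (card S) - sum q I)^2 / D^2"
  have "sum (subset_prob q I) T \<le> sum ?dev T"
  proof (rule sum_mono)
    fix S assume "S \<in> T"
    then have "0 \<le> subset_prob q I S" "D^2 \<le> (real (card S) - sum q I)^2"
      using assms subset_prob_nonneg[of I q S] by (auto simp flip: abs_le_square_iff)
    then show "subset_prob q I S \<le> ?dev S"
      using assms(3) by (simp add: field_simps mult_left_mono)
  qed
  also have "\<dots> \<le> sum ?dev (Pow I)"
    using assms subset_prob_nonneg[of I q] by (intro sum_mono2) auto
  also have "\<dots> = (\<Sum>n\<in>I. q n * (1 - q n)) / D^2"
    using assms(1) by (simp add: sum_subset_prob_deviation_squared flip: sum_divide_distrib)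
  also have "\<dots> \<le> real (card I) / D^2"
  proof -
    have "(\<Sum>n\<in>I. q n * (1 - q n)) \<le> (\<Sum>n\<in>I. 1)"
      using assms(2) by (intro sum_mono) (simp add: mult_le_one)
    then show ?thesis by (simp add: divide_right_mono)
  qed
  finally show ?thesis .
qed

lemma upper_tail_subset_prob_le:
  assumes "finite I" "\<And>n. n \<in> I \<Longrightarrow> 0 \<le> q n \<and> q n \<le> 1" "D > 0" "sum q I + D \<le> x"
  shows "sum (subset_prob q I) {S. S \<subseteq> I \<and> x \<le> real (card S)} \<le> real (card I) / D^2"
  using assms by (intro chebyshev_subset_prob) auto

lemma lower_tail_subset_prob_le:
  assumes "finite I" "\<And>n. n \<in> I \<Longrightarrow> 0 \<le> q n \<and> q n \<le> 1" "D > 0" "x + D \<le> sum q I"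
  shows "sum (subset_prob q I) {S. S \<subseteq> I \<and> \<not> x \<le> real (card S)} \<le> real (card I) / D^2"
  using assms by (intro chebyshev_subset_prob) auto

lemma prob_voteA_bounds:
  assumes "\<And>s. 0 \<le> Ps s w" "Ps sl w + Ps sh w = 1" "valid_strategy \<sigma>"
  shows "0 \<le> prob_voteA Ps \<sigma> w \<and> prob_voteA Ps \<sigma> w \<le> 1"
proof -
  have "Ps sl w * fst \<sigma> \<le> Ps sl w" "Ps sh w * snd \<sigma> \<le> Ps sh w"
    using assms by (simp_all add: valid_strategy_def mult_left_le)
  then show ?thesis
    using assms by (simp add: prob_voteA_def valid_strategy_def)
qed

lemma win_prob_eq_subset_prob:
  "win_prob Ps \<mu> N \<Sigma> w X = sum (subset_prob (\<lambda>n. prob_voteA Ps (\<Sigma> n) w) {..<N})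
     {S. S \<subseteq> {..<N} \<and> ((\<mu> * real N \<le> real (card S)) = (X = Acc))}"
  unfolding win_prob_def prob_voters_def subset_prob_def ..

lemma win_prob_Rej_add_Acc: "win_prob Ps \<mu> N \<Sigma> w Rej + win_prob Ps \<mu> N \<Sigma> w Acc = 1"
proof -
  let ?P = "subset_prob (\<lambda>n. prob_voteA Ps (\<Sigma> n) w) {..<N}"
  let ?A = "{S. S \<subseteq> {..<N} \<and> \<mu> * real N \<le> real (card S)}"
  have "sum ?P (Pow {..<N}) = sum ?P (Pow {..<N} - ?A) + sum ?P ?A"
    by (intro sum.subset_diff) auto
  moreover have "Pow {..<N} - ?A = {S. S \<subseteq> {..<N} \<and> \<not> \<mu> * real N \<le> real (card S)}" by auto
  ultimately show ?thesis
    by (simp add: win_prob_eq_subset_prob sum_subset_prob)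
qed

lemma fidelity_eq:
  assumes "PL + PH = 1"
  shows "fidelity PL PH Ps \<mu> N \<Sigma> = 1 - PL * win_prob Ps \<mu> N \<Sigma> L Acc - PH * win_prob Ps \<mu> N \<Sigma> H Rej"
proof -
  have complements: "win_prob Ps \<mu> N \<Sigma> L Rej = 1 - win_prob Ps \<mu> N \<Sigma> L Acc"
    "win_prob Ps \<mu> N \<Sigma> H Acc = 1 - win_prob Ps \<mu> N \<Sigma> H Rej"
    using win_prob_Rej_add_Acc[of Ps \<mu> N \<Sigma>] by (simp_all add: eq_diff_eq add.commute)
  have "fidelity PL PH Ps \<mu> N \<Sigma> =
      (PL + PH) - PL * win_prob Ps \<mu> N \<Sigma> L Acc - PH * win_prob Ps \<mu> N \<Sigma> H Rej"
    unfolding fidelity_def complements by (simp add: algebra_simps)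
  with assms show ?thesis by simp
qed

lemma win_prob_nonneg:
  assumes "\<And>s. 0 \<le> Ps s w" "Ps sl w + Ps sh w = 1" "\<And>n. n < N \<Longrightarrow> valid_strategy (\<Sigma> n)"
  shows "0 \<le> win_prob Ps \<mu> N \<Sigma> w X"
  unfolding win_prob_eq_subset_prob
  using assms prob_voteA_bounds by (intro sum_nonneg subset_prob_nonneg) auto

lemma win_prob_Acc_le:
  assumes "\<And>s. 0 \<le> Ps s w" "Ps sl w + Ps sh w = 1" "\<And>n. n < N \<Longrightarrow> valid_strategy (\<Sigma> n)"
    "D > 0" "(\<Sum>n<N. prob_voteA Ps (\<Sigma> n) w) + D \<le> \<mu> * real N"
  shows "win_prob Ps \<mu> N \<Sigma> w Acc \<le> real N / D^2"
  unfolding win_prob_eq_subset_prob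
  using upper_tail_subset_prob_le[of "{..<N}" "\<lambda>n. prob_voteA Ps (\<Sigma> n) w" D "\<mu> * real N"]
    assms prob_voteA_bounds by simp

lemma win_prob_Rej_le:
  assumes "\<And>s. 0 \<le> Ps s w" "Ps sl w + Ps sh w = 1" "\<And>n. n < N \<Longrightarrow> valid_strategy (\<Sigma> n)"
    "D > 0" "\<mu> * real N + D \<le> (\<Sum>n<N. prob_voteA Ps (\<Sigma> n) w)"
  shows "win_prob Ps \<mu> N \<Sigma> w Rej \<le> real N / D^2"
  unfolding win_prob_eq_subset_prob
  using lower_tail_subset_prob_le[of "{..<N}" "\<lambda>n. prob_voteA Ps (\<Sigma> n) w" D "\<mu> * real N"]
    assms prob_voteA_bounds by simp

lemma fidelity_le_one:
  assumes "\<And>s w. 0 \<le> Ps s w" "\<And>w. Ps sl w + Ps sh w = 1" "\<And>n. n < N \<Longrightarrow> valid_strategy (\<Sigma> n)"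
    "0 \<le> PL" "0 \<le> PH" "PL + PH = 1"
  shows "fidelity PL PH Ps \<mu> N \<Sigma> \<le> 1"
proof -
  have "0 \<le> PL * win_prob Ps \<mu> N \<Sigma> L Acc" "0 \<le> PH * win_prob Ps \<mu> N \<Sigma> H Rej"
    using assms win_prob_nonneg[of Ps _ N \<Sigma>] by simp_all
  then show ?thesis
    using fidelity_eq[OF assms(6), of Ps \<mu> N \<Sigma>] by linarith
qed

lemma exists_separating_strategy:
  assumes "0 < t" "t < 1" "\<And>s w. 0 \<le> Ps s w" "\<And>w. Ps sl w + Ps sh w = 1" "Ps sh L < Ps sh H"
  obtains \<sigma> g where "valid_strategy \<sigma>" "0 < g" "prob_voteA Ps \<sigma> L = t - g" "prob_voteA Ps \<sigma> H = t + g"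
proof -
  \<comment> \<open>\<open>\<sigma>\<close> votes A with probability \<open>t + k (Ps sh w - m)\<close>, \<open>m\<close> the midpoint of
    \<open>Ps sh L\<close> and \<open>Ps sh H\<close>; the slope \<open>k\<close> is small enough to keep both entries in [0, 1].\<close>
  define k where "k = min t (1 - t)"
  define m where "m = (Ps sh L + Ps sh H) / 2"
  define \<sigma> where "\<sigma> = (t - k * m, t + k * (1 - m))"
  have sh_bounds: "0 \<le> Ps sh w \<and> Ps sh w \<le> 1" for w
    using assms(3)[of _ w] assms(4)[of w] by (smt (verit))
  have "0 \<le> m" "m \<le> 1"
    unfolding m_def using sh_bounds[of L] sh_bounds[of H] by auto
  moreover have "0 < k" "k \<le> t" "k \<le> 1 - t"
    unfolding k_def using assms(1,2) by auto
  ultimately have "0 \<le> k * m" "k * m \<le> k" "0 \<le> k * (1 - m)" "k * (1 - m) \<le> k"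
    by (simp_all add: mult_left_le)
  then have "valid_strategy \<sigma>"
    unfolding \<sigma>_def valid_strategy_def using \<open>k \<le> t\<close> \<open>k \<le> 1 - t\<close> by simp
  moreover have prob: "prob_voteA Ps \<sigma> w = t + k * (Ps sh w - m)" for w
  proof -
    have sl_eq: "Ps sl w = 1 - Ps sh w" using assms(4)[of w] by simp
    show ?thesis
      unfolding prob_voteA_def \<sigma>_def fst_conv snd_conv sl_eq by (simp add: algebra_simps)
  qed
  moreover have "0 < k * (Ps sh H - Ps sh L) / 2"
    using \<open>0 < k\<close> assms(5) by simp
  ultimately show ?thesis
    using that[of \<sigma> "k * (Ps sh H - Ps sh L) / 2"] unfolding prob m_def by (simp add: field_simps)
qed

definition uniform_regular_profile :: "(nat \<Rightarrow> utility) \<Rightarrow> strategy \<Rightarrow> nat \<Rightarrow> strategy" where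
  "uniform_regular_profile v \<sigma> n =
     (if friendly (v n) then (1, 1) else if unfriendly (v n) then (0, 0) else \<sigma>)"

lemma friendly_not_unfriendly: "friendly u \<Longrightarrow> \<not> unfriendly u"
  unfolding friendly_def unfriendly_def by auto

lemma valid_strategy_uniform_regular_profile:
  "valid_strategy \<sigma> \<Longrightarrow> valid_strategy (uniform_regular_profile v \<sigma> n)"
  unfolding uniform_regular_profile_def valid_strategy_def by auto

lemma regular_profile_uniform_regular_profile:
  "valid_strategy \<sigma> \<Longrightarrow> regular_profile N v (uniform_regular_profile v \<sigma>)"
  unfolding regular_profile_def using valid_strategy_uniform_regular_profile friendly_not_unfriendly
  by (auto simp: uniform_regular_profile_def)

lemma sum_prob_voteA_uniform_regular_profile:
  fixes \<sigma> :: strategy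
  assumes "Ps sl w + Ps sh w = 1"
  defines "p \<equiv> prob_voteA Ps \<sigma> w"
  shows "(\<Sum>n<N. prob_voteA Ps (uniform_regular_profile v \<sigma> n) w) =
    real N * p + real (card {n. n < N \<and> friendly (v n)}) * (1 - p)
      - real (card {n. n < N \<and> unfriendly (v n)}) * p"
proof -
  have "prob_voteA Ps (uniform_regular_profile v \<sigma> n) w =
      p + of_bool (friendly (v n)) * (1 - p) - of_bool (unfriendly (v n)) * p" for n
    using assms friendly_not_unfriendly[of "v n"]
    by (auto simp: uniform_regular_profile_def prob_voteA_def)
  moreover have "{..<N} \<inter> {n. P n} = {n. n < N \<and> P n}" for P by auto
  ultimately show ?thesis
    by (simp add: sum.distrib sum_subtractf flip: sum_distrib_right)
qed

lemma expected_A_votes_approx: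
  assumes "valid_instance B alphaF alphaU N v" "0 \<le> alphaF" "0 \<le> alphaU"
    "Ps sl w + Ps sh w = 1" "0 \<le> prob_voteA Ps \<sigma> w" "prob_voteA Ps \<sigma> w \<le> 1"
  shows "\<bar>(\<Sum>n<N. prob_voteA Ps (uniform_regular_profile v \<sigma> n) w)
    - real N * (alphaF + (1 - alphaF - alphaU) * prob_voteA Ps \<sigma> w)\<bar> \<le> 1"
proof -
  let ?p = "prob_voteA Ps \<sigma> w"
  let ?F = "real (card {n. n < N \<and> friendly (v n)})"
  let ?U = "real (card {n. n < N \<and> unfriendly (v n)})"
  have "alphaF * real N - 1 \<le> ?F" "?F \<le> alphaF * real N"
    "alphaU * real N - 1 \<le> ?U" "?U \<le> alphaU * real N"
    using assms(1-3) unfolding valid_instance_def by (simp_all add: of_nat_nat)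
  then have "(alphaF * real N - 1) * (1 - ?p) \<le> ?F * (1 - ?p)" "?F * (1 - ?p) \<le> alphaF * real N * (1 - ?p)"
    "(alphaU * real N - 1) * ?p \<le> ?U * ?p" "?U * ?p \<le> alphaU * real N * ?p"
    using assms(5,6) by (simp_all add: mult_right_mono)
  then show ?thesis
    unfolding sum_prob_voteA_uniform_regular_profile[where Ps=Ps and w=w, OF assms(4)]
    using assms(5,6) by (simp add: algebra_simps abs_le_iff)
qed

lemma fidelity_uniform_regular_profile_ge:
  assumes Ps: "\<And>s w. 0 \<le> Ps s w" "\<And>w. Ps sl w + Ps sh w = 1"
    and prior: "0 \<le> PL" "0 \<le> PH" "PL + PH = 1"
    and inst: "valid_instance B alphaF alphaU N v" "0 \<le> alphaF" "0 \<le> alphaU"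
    and \<sigma>: "valid_strategy \<sigma>" "prob_voteA Ps \<sigma> L = t - g" "prob_voteA Ps \<sigma> H = t + g"
    and threshold: "alphaF + (1 - alphaF - alphaU) * t = \<mu>"
    and c: "c = (1 - alphaF - alphaU) * g" "2 \<le> c * real N"
  shows "1 - 4 / c^2 / real N \<le> fidelity PL PH Ps \<mu> N (uniform_regular_profile v \<sigma>)"
proof -
  let ?\<Sigma> = "uniform_regular_profile v \<sigma>"
  let ?E = "\<lambda>w. \<Sum>n<N. prob_voteA Ps (?\<Sigma> n) w"
  let ?D = "c * real N / 2"
  have valid: "\<And>n. n < N \<Longrightarrow> valid_strategy (?\<Sigma> n)"
    using valid_strategy_uniform_regular_profile[OF \<sigma>(1)] by blast
  have "0 < c * real N"
    using c(2) by linarith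
  then have "0 < c" "0 < real N"
    by (auto simp: zero_less_mult_iff)
  then have D: "0 < ?D" "real N / ?D^2 = 4 / c^2 / real N"
    by (simp_all add: power2_eq_square field_simps)
  have approx: "\<bar>?E w - real N * (alphaF + (1 - alphaF - alphaU) * prob_voteA Ps \<sigma> w)\<bar> \<le> 1" for w
    using expected_A_votes_approx[where Ps=Ps and w=w, OF inst Ps(2)]
      prob_voteA_bounds[where Ps=Ps and w=w, OF Ps(1) Ps(2) \<sigma>(1)]
    by blast
  have "real N * (alphaF + (1 - alphaF - alphaU) * (t + s * g)) = \<mu> * real N + s * c * real N" for s
    unfolding threshold[symmetric] c(1) by (simp add: algebra_simps)
  from this[of "-1"] this[of 1] have margins: "?E L + ?D \<le> \<mu> * real N" "\<mu> * real N + ?D \<le> ?E H"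
    using approx[of L] approx[of H] \<sigma>(2,3) c(2) by (auto simp: abs_le_iff)
  have "win_prob Ps \<mu> N ?\<Sigma> L Acc \<le> real N / ?D^2"
    by (rule win_prob_Acc_le) (use Ps valid D(1) margins in auto)
  moreover have "win_prob Ps \<mu> N ?\<Sigma> H Rej \<le> real N / ?D^2"
    by (rule win_prob_Rej_le) (use Ps valid D(1) margins in auto)
  ultimately have "PL * win_prob Ps \<mu> N ?\<Sigma> L Acc + PH * win_prob Ps \<mu> N ?\<Sigma> H Rej \<le> (PL + PH) * (4 / c^2 / real N)"
    unfolding D(2) distrib_right using prior by (intro add_mono mult_left_mono)
  then show ?thesis
    using fidelity_eq[OF prior(3), of Ps \<mu> N ?\<Sigma>] prior(3) by simp
qed

theorem theorem3:
  fixes \<mu> PL PH alphaF alphaU alphaC :: real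
    and Ps :: "signal \<Rightarrow> world \<Rightarrow> real"
    and B :: nat
    and v :: "nat \<Rightarrow> nat \<Rightarrow> utility"
  assumes mu: "0 < \<mu>" "\<mu> < 1"
    and prior: "0 < PL" "0 < PH" "PL + PH = 1"
    and sig: "\<And>s w. 0 \<le> Ps s w" "\<And>w. Ps sl w + Ps sh w = 1"
      "Ps sh H > Ps sh L" "Ps sl H < Ps sl L"
    and alpha: "0 \<le> alphaF" "0 \<le> alphaU" "0 \<le> alphaC" "alphaF + alphaU + alphaC = 1"
    and nodom: "alphaF < \<mu>" "alphaU < 1 - \<mu>"
    and inst: "\<And>N. N \<ge> 1 \<Longrightarrow> valid_instance B alphaF alphaU N (v N)"
  shows "\<exists>\<Sigma> :: nat \<Rightarrow> nat \<Rightarrow> strategy.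
           (\<forall>N\<ge>1. regular_profile N (v N) (\<Sigma> N)) \<and>
           (\<lambda>N. fidelity PL PH Ps \<mu> N (\<Sigma> N)) \<longlonglongrightarrow> 1"
proof -
  define t where "t = (\<mu> - alphaF) / (1 - alphaF - alphaU)"
  have "0 < t" "t < 1" and threshold: "alphaF + (1 - alphaF - alphaU) * t = \<mu>"
    using nodom unfolding t_def by (simp_all add: field_simps)
  then obtain \<sigma> g where \<sigma>: "valid_strategy \<sigma>" "0 < g"
    "prob_voteA Ps \<sigma> L = t - g" "prob_voteA Ps \<sigma> H = t + g"
    using exists_separating_strategy sig(1-3) by metis
  define c where "c = (1 - alphaF - alphaU) * g"
  define \<Sigma> where "\<Sigma> N = uniform_regular_profile (v N) \<sigma>" for N
  have "0 < c" using nodom \<sigma>(2) unfolding c_def by simp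
  then have large: "\<forall>\<^sub>F N in sequentially. 2 \<le> c * real N"
    using filterlim_real_sequentially[unfolded filterlim_at_top, rule_format, of "2 / c"]
    by (auto elim!: eventually_mono simp: field_simps)
  have lower: "1 - 4 / c^2 / real N \<le> fidelity PL PH Ps \<mu> N (\<Sigma> N)" if "2 \<le> c * real N" for N
  proof -
    have "N \<ge> 1" using that by (cases N) auto
    with that show ?thesis
      unfolding \<Sigma>_def using prior alpha
      by (intro fidelity_uniform_regular_profile_ge[OF sig(1,2) _ _ prior(3) inst _ _ \<sigma>(1,3,4) threshold c_def])
        auto
  qed
  have upper: "fidelity PL PH Ps \<mu> N (\<Sigma> N) \<le> 1" for N
    unfolding \<Sigma>_def using prior
    by (intro fidelity_le_one sig valid_strategy_uniform_regular_profile \<sigma>(1)) auto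
  have "(\<lambda>N. 1 - 4 / c^2 / real N) \<longlonglongrightarrow> 1"
    using tendsto_diff[OF tendsto_const lim_const_over_n, of 1 "4 / c^2"] by simp
  with upper have "(\<lambda>N. fidelity PL PH Ps \<mu> N (\<Sigma> N)) \<longlonglongrightarrow> 1"
    by (intro tendsto_sandwich[OF eventually_mono[OF large lower] always_eventually _ tendsto_const]) auto
  moreover have "\<forall>N\<ge>1. regular_profile N (v N) (\<Sigma> N)"
    unfolding \<Sigma>_def using regular_profile_uniform_regular_profile[OF \<sigma>(1)] by blast
  ultimately show ?thesis by blast
qed

end
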